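(* Let $I\subset\mathbb{R}$ be an open interval and let $f:I\to\mathbb{R}$ be a strictly convex function of class $C^{3}$ (i.e. $f''>0$ on $I$), with graph $X$. Then $f$ is a quadratic polynomial if and only if $X$ satisfies the following Condition (B): for every sufficiently small $k>0$, letting $X_k$ denote the graph of $y=f(x)+k$, for every point $V$ on $X_k$ the tangent line to $X_k$ at $V$ meets $X$ at two points $A$ and $B$, and the area of the region bounded by $X$ and the chord $AB$ is a number $\phi(k)$ depending only on $k$ (independent of the choice of $V$).
   Context: The "region bounded by $X$ and the chord $AB$" is the region enclosed by the arc of $X$ between $A$ and $B$ and the segment $AB$. *)

theory Defs
  imports "HOL-Analysis.Analysis"
begin

definition tangent_line :: "(real \<Rightarrow> real) \<Rightarrow> real \<Rightarrow> real \<Rightarrow> real \<Rightarrow> real" where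
  "tangent_line f k v x = f v + k + deriv f v * (x - v)"

definition condition_B :: "real set \<Rightarrow> (real \<Rightarrow> real) \<Rightarrow> bool" where
  "condition_B I f \<longleftrightarrow>
     (\<exists>\<delta>>0. \<exists>\<phi> :: real \<Rightarrow> real. \<forall>k. 0 < k \<and> k < \<delta> \<longrightarrow>
        (\<forall>v\<in>I. \<forall>\<alpha> \<beta>. \<alpha> < \<beta> \<and> {x\<in>I. f x = tangent_line f k v x} = {\<alpha>, \<beta>} \<longrightarrow>
            integral {\<alpha>..\<beta>} (\<lambda>x. tangent_line f k v x - f x) = \<phi> k))"

end

theory Submission
  imports Defs
begin

text \<open>For a quadratic f = a x^2 + b x + c the graph lies a (x - v)^2 above its tangent at v,
  so every tangent of X_k cuts X in a chord of half-width sqrt (k / a) and the cap has area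
  4/3 k sqrt (k / a). Conversely, near any point v the height of X above its tangent at v is
  squeezed between c (x - v)^2 and C (x - v)^2 whenever c \<le> f''/2 \<le> C locally, so for small k
  the cap at v has area between 4/3 k sqrt (k / C) and 4/3 k sqrt (k / c). If f'' v1 < f'' v2,
  continuity of f'' gives such bounds with C at v1 below c at v2, making the cap at v1
  strictly larger than the one at v2 and contradicting Condition (B). Hence f'' is constant.\<close>

lemma is_interval_atLeastAtMost_subset:
  fixes I :: "real set"
  assumes "is_interval I" "a \<in> I" "b \<in> I"
  shows "{a..b} \<subseteq> I"
  using assms unfolding is_interval_1 by (meson atLeastAtMost_iff subsetI)

lemma abs_le_sqrt_div_iff:
  fixes c k y :: real
  assumes "c > 0"
  shows "\<bar>y\<bar> \<le> sqrt (k / c) \<longleftrightarrow> c * y^2 \<le> k"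
proof -
  have "\<bar>y\<bar> \<le> sqrt (k / c) \<longleftrightarrow> y^2 \<le> k / c"
    by (metis real_sqrt_abs real_sqrt_le_iff)
  then show ?thesis
    using assms by (simp add: field_simps mult.commute)
qed

lemma sqrt_div_le_abs_iff:
  fixes c k y :: real
  assumes "c > 0"
  shows "sqrt (k / c) \<le> \<bar>y\<bar> \<longleftrightarrow> k \<le> c * y^2"
proof -
  have "sqrt (k / c) \<le> \<bar>y\<bar> \<longleftrightarrow> k / c \<le> y^2"
    by (metis real_sqrt_abs real_sqrt_le_iff)
  then show ?thesis
    using assms by (simp add: field_simps mult.commute)
qed

lemma parabola_cap_has_integral:
  fixes c k v :: real
  assumes "c > 0" "k \<ge> 0"
  defines "h \<equiv> sqrt (k / c)"
  shows "((\<lambda>x. k - c * (x - v)^2) has_integral 4/3 * k * h) {v - h..v + h}"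
proof -
  let ?F = "\<lambda>x. k * x - c * (x - v)^3 / 3"
  have "(?F has_real_derivative k - c * (x - v)^2) (at x)" for x
    by (auto intro!: derivative_eq_intros simp: power2_eq_square)
  then have "((\<lambda>x. k - c * (x - v)^2) has_integral ?F (v + h) - ?F (v - h)) {v - h..v + h}"
    using assms by (intro fundamental_theorem_of_calculus)
      (auto simp: h_def has_real_derivative_iff_has_vector_derivative intro: has_vector_derivative_at_within)
  moreover have "c * h^2 = k"
    using assms by (simp add: h_def)
  then have "?F (v + h) - ?F (v - h) = 4/3 * k * h"
    by (simp add: power3_eq_cube power2_eq_square algebra_simps)
  ultimately show ?thesis
    by metis
qed

lemma cap_area_ge:
  fixes g :: "real \<Rightarrow> real"
  assumes "\<alpha> \<le> v" "v \<le> \<beta>" "C > 0" "k \<ge> 0"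
    and cont: "continuous_on {\<alpha>..\<beta>} g" and "g \<alpha> = k" "g \<beta> = k"
    and below_k: "\<And>x. x \<in> {\<alpha>..\<beta>} \<Longrightarrow> g x \<le> k"
    and below_parabola: "\<And>x. x \<in> {\<alpha>..\<beta>} \<Longrightarrow> g x \<le> C * (x - v)^2"
  shows "4/3 * k * sqrt (k / C) \<le> integral {\<alpha>..\<beta>} (\<lambda>x. k - g x)"
proof -
  define h where "h = sqrt (k / C)"
  have "h \<le> \<bar>\<alpha> - v\<bar>" "h \<le> \<bar>\<beta> - v\<bar>"
    unfolding h_def sqrt_div_le_abs_iff[OF \<open>C > 0\<close>]
    using below_parabola[of \<alpha>] below_parabola[of \<beta>] assms by auto
  then have sub: "{v - h..v + h} \<subseteq> {\<alpha>..\<beta>}"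
    using assms by auto
  have int: "(\<lambda>x. k - g x) integrable_on {a..b}" if "{a..b} \<subseteq> {\<alpha>..\<beta>}" for a b
    by (intro integrable_continuous_interval continuous_intros continuous_on_subset[OF cont that])
  have "4/3 * k * h = integral {v - h..v + h} (\<lambda>x. k - C * (x - v)^2)"
    using parabola_cap_has_integral[of C k v] assms by (simp add: h_def integral_unique)
  also have "\<dots> \<le> integral {v - h..v + h} (\<lambda>x. k - g x)"
    using sub below_parabola
    by (intro integral_le integrable_continuous_interval continuous_intros int) auto
  also have "\<dots> \<le> integral {\<alpha>..\<beta>} (\<lambda>x. k - g x)"
    using sub below_k by (intro integral_subset_le int) auto
  finally show ?thesis
    by (simp add: h_def)
qed

lemma cap_area_le:
  fixes g :: "real \<Rightarrow> real"
  assumes "\<alpha> \<le> \<beta>" "c > 0" "k \<ge> 0"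
    and cont: "continuous_on {\<alpha>..\<beta>} g" and "g \<alpha> = k" "g \<beta> = k"
    and above_parabola: "\<And>x. x \<in> {\<alpha>..\<beta>} \<Longrightarrow> c * (x - v)^2 \<le> g x"
  shows "integral {\<alpha>..\<beta>} (\<lambda>x. k - g x) \<le> 4/3 * k * sqrt (k / c)"
proof -
  define h where "h = sqrt (k / c)"
  have "\<bar>\<alpha> - v\<bar> \<le> h" "\<bar>\<beta> - v\<bar> \<le> h"
    unfolding h_def abs_le_sqrt_div_iff[OF \<open>c > 0\<close>]
    using above_parabola[of \<alpha>] above_parabola[of \<beta>] assms by auto
  then have sub: "{\<alpha>..\<beta>} \<subseteq> {v - h..v + h}"
    by auto
  have cap_nonneg: "0 \<le> k - c * (x - v)^2" if "x \<in> {v - h..v + h}" for x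
    using that assms by (auto simp: h_def abs_le_sqrt_div_iff[symmetric])
  have "integral {\<alpha>..\<beta>} (\<lambda>x. k - g x) \<le> integral {\<alpha>..\<beta>} (\<lambda>x. k - c * (x - v)^2)"
    using above_parabola
    by (intro integral_le integrable_continuous_interval continuous_intros cont) auto
  also have "\<dots> \<le> integral {v - h..v + h} (\<lambda>x. k - c * (x - v)^2)"
    using sub cap_nonneg
    by (intro integral_subset_le integrable_continuous_interval continuous_intros) auto
  also have "\<dots> = 4/3 * k * h"
    using parabola_cap_has_integral[of c k v] assms by (simp add: h_def integral_unique)
  finally show ?thesis
    by (simp add: h_def)
qed

lemma isCont_closed_interval_nbhd:
  fixes g :: "real \<Rightarrow> real"
  assumes "open S" "v \<in> S" "isCont g v" "\<epsilon> > 0"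
  obtains r where "r > 0" "{v - r..v + r} \<subseteq> S"
    "\<And>x. x \<in> {v - r..v + r} \<Longrightarrow> \<bar>g x - g v\<bar> < \<epsilon>"
proof -
  obtain d where "d > 0" and d: "\<And>x. dist x v < d \<Longrightarrow> dist (g x) (g v) < \<epsilon>"
    using assms(3,4) unfolding continuous_at_eps_delta by blast
  obtain e where "e > 0" "ball v e \<subseteq> S"
    using assms(1,2) open_contains_ball by blast
  define r where "r = min d e / 2"
  have "r > 0" "r < d" "r < e"
    using \<open>d > 0\<close> \<open>e > 0\<close> by (auto simp: r_def)
  moreover have "{v - r..v + r} \<subseteq> ball v e"
    using \<open>r < e\<close> by (auto simp: dist_real_def)
  with \<open>ball v e \<subseteq> S\<close> have "{v - r..v + r} \<subseteq> S"
    by blast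
  moreover have "\<bar>g x - g v\<bar> < \<epsilon>" if "x \<in> {v - r..v + r}" for x
    using d[of x] that \<open>r < d\<close> by (auto simp: dist_real_def)
  ultimately show ?thesis
    using that by blast
qed

definition is_tangent_chord :: "real set \<Rightarrow> (real \<Rightarrow> real) \<Rightarrow> real \<Rightarrow> real \<Rightarrow> real \<Rightarrow> real \<Rightarrow> bool"
  where "is_tangent_chord I f k v \<alpha> \<beta> \<longleftrightarrow> \<alpha> < \<beta> \<and> {x \<in> I. f x = tangent_line f k v x} = {\<alpha>, \<beta>}"

definition tangent_cap_area :: "(real \<Rightarrow> real) \<Rightarrow> real \<Rightarrow> real \<Rightarrow> real \<Rightarrow> real \<Rightarrow> real"
  where "tangent_cap_area f k v \<alpha> \<beta> = integral {\<alpha>..\<beta>} (\<lambda>x. tangent_line f k v x - f x)"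

lemma condition_B_iff_eventually:
  "condition_B I f \<longleftrightarrow> (\<exists>\<phi>. \<forall>\<^sub>F k in at_right 0. \<forall>v\<in>I. \<forall>\<alpha> \<beta>.
     is_tangent_chord I f k v \<alpha> \<beta> \<longrightarrow> tangent_cap_area f k v \<alpha> \<beta> = \<phi> k)"
  unfolding condition_B_def eventually_at_right_field is_tangent_chord_def tangent_cap_area_def
  by meson

locale positive_second_derivative =
  fixes I :: "real set" and f f' f'' :: "real \<Rightarrow> real"
  assumes open_I: "open I" and interval_I: "is_interval I"
    and f': "\<And>x. x \<in> I \<Longrightarrow> (f has_real_derivative f' x) (at x)"
    and f'': "\<And>x. x \<in> I \<Longrightarrow> (f' has_real_derivative f'' x) (at x)"
    and f''_pos: "\<And>x. x \<in> I \<Longrightarrow> f'' x > 0"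
begin

lemma f'_strict_mono:
  assumes "x \<in> I" "y \<in> I" "x < y"
  shows "f' x < f' y"
proof (rule DERIV_pos_imp_increasing[OF \<open>x < y\<close>])
  fix t assume "x \<le> t" "t \<le> y"
  then have "t \<in> I"
    using is_interval_atLeastAtMost_subset[OF interval_I assms(1,2)] by auto
  then show "\<exists>d. (f' has_real_derivative d) (at t) \<and> d > 0"
    using f'' f''_pos by blast
qed

definition tangent_gap :: "real \<Rightarrow> real \<Rightarrow> real" where
  "tangent_gap v x = f x - f v - f' v * (x - v)"

lemma tangent_line_minus_f:
  "v \<in> I \<Longrightarrow> tangent_line f k v x - f x = k - tangent_gap v x"
  using DERIV_imp_deriv[OF f'] by (simp add: tangent_line_def tangent_gap_def)

lemma tangent_gap_has_real_derivative:
  "x \<in> I \<Longrightarrow> (tangent_gap v has_real_derivative f' x - f' v) (at x)"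
  unfolding tangent_gap_def by (auto intro!: derivative_eq_intros f')

lemma continuous_on_tangent_gap:
  "{a..b} \<subseteq> I \<Longrightarrow> continuous_on {a..b} (tangent_gap v)"
  by (intro DERIV_atLeastAtMost_imp_continuous_on)
    (meson atLeastAtMost_iff subsetD tangent_gap_has_real_derivative)

lemma tangent_gap_strict_mono:
  assumes "v \<in> I" "y \<in> I" "v \<le> x" "x < y"
  shows "tangent_gap v x < tangent_gap v y"
proof (rule DERIV_pos_imp_increasing_open[OF \<open>x < y\<close>])
  fix t assume "x < t" "t < y"
  moreover have "t \<in> I"
    using calculation assms is_interval_atLeastAtMost_subset[OF interval_I, of v y] by auto
  ultimately show "\<exists>d. (tangent_gap v has_real_derivative d) (at t) \<and> d > 0"
    using assms f'_strict_mono[of v t] tangent_gap_has_real_derivative[of t] by force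
next
  show "continuous_on {x..y} (tangent_gap v)"
    using assms is_interval_atLeastAtMost_subset[OF interval_I, of v y]
    by (intro continuous_on_tangent_gap) auto
qed

lemma tangent_gap_strict_antimono:
  assumes "v \<in> I" "x \<in> I" "y \<le> v" "x < y"
  shows "tangent_gap v y < tangent_gap v x"
proof (rule DERIV_neg_imp_decreasing_open[OF \<open>x < y\<close>])
  fix t assume "x < t" "t < y"
  moreover have "t \<in> I"
    using calculation assms is_interval_atLeastAtMost_subset[OF interval_I, of x v] by auto
  ultimately show "\<exists>d. (tangent_gap v has_real_derivative d) (at t) \<and> d < 0"
    using assms f'_strict_mono[of t v] tangent_gap_has_real_derivative[of t] by force
next
  show "continuous_on {x..y} (tangent_gap v)"
    using assms is_interval_atLeastAtMost_subset[OF interval_I, of x v]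
    by (intro continuous_on_tangent_gap) auto
qed

lemma tangent_gap_le_max:
  assumes "v \<in> I" "\<alpha> \<in> I" "\<beta> \<in> I" "x \<in> {\<alpha>..\<beta>}"
  shows "tangent_gap v x \<le> max (tangent_gap v \<alpha>) (tangent_gap v \<beta>)"
proof (cases "v \<le> x")
  case True
  then have "tangent_gap v x \<le> tangent_gap v \<beta>"
    using assms tangent_gap_strict_mono[of v \<beta> x] by (cases "x = \<beta>") auto
  then show ?thesis
    by linarith
next
  case False
  then have "tangent_gap v x \<le> tangent_gap v \<alpha>"
    using assms tangent_gap_strict_antimono[of v \<alpha> x] by (cases "x = \<alpha>") auto
  then show ?thesis
    by linarith
qed

lemma tangent_gap_taylor:
  assumes "x \<in> I" "v \<in> I"
  obtains t where "t \<in> {min x v..max x v}" "tangent_gap v x = f'' t / 2 * (x - v)^2"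
proof (cases "x = v")
  case True
  then show ?thesis
    using that[of v] by (simp add: tangent_gap_def)
next
  case False
  define diff where "diff = (\<lambda>n::nat. if n = 0 then f else if n = 1 then f' else f'')"
  have "{min x v..max x v} \<subseteq> I"
    using assms
    by (intro is_interval_atLeastAtMost_subset[OF interval_I]) (simp_all add: min_def max_def)
  then have "\<forall>m t. m < 2 \<and> min x v \<le> t \<and> t \<le> max x v \<longrightarrow>
      DERIV (diff m) t :> diff (Suc m) t"
    using f' f'' by (auto simp: diff_def less_2_cases_iff)
  then obtain t where "if x < v then x < t \<and> t < v else v < t \<and> t < x"
      "f x = (\<Sum>m<2. diff m v / fact m * (x - v)^m) + diff 2 t / fact 2 * (x - v)^2"
    using Taylor[of 2 diff f "min x v" "max x v" v x] False by (auto simp: diff_def)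
  then show ?thesis
    using that[of t] by (auto simp: diff_def tangent_gap_def eval_nat_numeral split: if_splits)
qed

lemma tangent_gap_ge_parabola:
  assumes "x \<in> I" "v \<in> I" "\<And>t. t \<in> {min x v..max x v} \<Longrightarrow> c \<le> f'' t / 2"
  shows "c * (x - v)^2 \<le> tangent_gap v x"
proof -
  obtain t where "t \<in> {min x v..max x v}" "tangent_gap v x = f'' t / 2 * (x - v)^2"
    using tangent_gap_taylor[OF assms(1,2)] .
  moreover from this have "c * (x - v)^2 \<le> f'' t / 2 * (x - v)^2"
    using assms(3) by (intro mult_right_mono) auto
  ultimately show ?thesis
    by simp
qed

lemma tangent_gap_le_parabola:
  assumes "x \<in> I" "v \<in> I" "\<And>t. t \<in> {min x v..max x v} \<Longrightarrow> f'' t / 2 \<le> C"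
  shows "tangent_gap v x \<le> C * (x - v)^2"
proof -
  obtain t where "t \<in> {min x v..max x v}" "tangent_gap v x = f'' t / 2 * (x - v)^2"
    using tangent_gap_taylor[OF assms(1,2)] .
  moreover from this have "f'' t / 2 * (x - v)^2 \<le> C * (x - v)^2"
    using assms(3) by (intro mult_right_mono) auto
  ultimately show ?thesis
    by simp
qed

lemma tangent_gap_level_set:
  assumes v: "v \<in> I" and "\<alpha> \<in> I" "\<beta> \<in> I" "\<alpha> \<le> v" "v \<le> \<beta>"
    and "tangent_gap v \<alpha> = k" "tangent_gap v \<beta> = k"
  shows "{x \<in> I. tangent_gap v x = k} = {\<alpha>, \<beta>}"
proof (intro set_eqI iffI)
  fix x assume "x \<in> {x \<in> I. tangent_gap v x = k}"
  then have x: "x \<in> I" "tangent_gap v x = k"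
    by auto
  show "x \<in> {\<alpha>, \<beta>}"
  proof (cases "v \<le> x")
    case True
    then have "\<not> x < \<beta>" "\<not> \<beta> < x"
      using tangent_gap_strict_mono[OF v \<open>\<beta> \<in> I\<close>, of x]
        tangent_gap_strict_mono[OF v x(1), of \<beta>] x assms by auto
    then show ?thesis
      by auto
  next
    case False
    then have "\<not> x < \<alpha>" "\<not> \<alpha> < x"
      using tangent_gap_strict_antimono[OF v x(1), of \<alpha>]
        tangent_gap_strict_antimono[OF v \<open>\<alpha> \<in> I\<close>, of x] x assms by auto
    then show ?thesis
      by auto
  qed
qed (use assms in auto)

lemma tangent_gap_chord:
  assumes v: "v \<in> I" and "r > 0" and nbhd: "{v - r..v + r} \<subseteq> I"
    and curv: "\<And>t. t \<in> {v - r..v + r} \<Longrightarrow> c \<le> f'' t / 2"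
    and "0 < k" "k < c * r^2"
  obtains \<alpha> \<beta> where "v - r \<le> \<alpha>" "\<alpha> < v" "v < \<beta>" "\<beta> \<le> v + r"
    "{x \<in> I. tangent_gap v x = k} = {\<alpha>, \<beta>}"
proof -
  have far: "k < tangent_gap v x" if "x \<in> {v - r, v + r}" for x
  proof -
    have "k < c * (x - v)^2"
      using that assms by auto
    also have "\<dots> \<le> tangent_gap v x"
      using that nbhd \<open>r > 0\<close> by (intro tangent_gap_ge_parabola v curv) auto
    finally show ?thesis .
  qed
  have gap_v: "tangent_gap v v = 0"
    by (simp add: tangent_gap_def)
  obtain \<beta> where \<beta>: "v \<le> \<beta>" "\<beta> \<le> v + r" "tangent_gap v \<beta> = k"
    using IVT'[of "tangent_gap v" v k "v + r"] far[of "v + r"] gap_v \<open>0 < k\<close> \<open>r > 0\<close> nbhd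
      continuous_on_tangent_gap[of v "v + r"] by force
  obtain \<alpha> where \<alpha>: "v - r \<le> \<alpha>" "\<alpha> \<le> v" "tangent_gap v \<alpha> = k"
    using IVT2'[of "tangent_gap v" v k "v - r"] far[of "v - r"] gap_v \<open>0 < k\<close> \<open>r > 0\<close> nbhd
      continuous_on_tangent_gap[of "v - r" v] by force
  have "\<alpha> \<noteq> v" "\<beta> \<noteq> v"
    using \<alpha> \<beta> gap_v \<open>0 < k\<close> by auto
  with \<alpha> \<beta> have "\<alpha> < v" "v < \<beta>"
    by auto
  have "{x \<in> I. tangent_gap v x = k} = {\<alpha>, \<beta>}"
    using \<alpha> \<beta> nbhd by (intro tangent_gap_level_set v) auto
  then show ?thesis
    using that \<alpha> \<beta> \<open>\<alpha> < v\<close> \<open>v < \<beta>\<close> by blast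
qed

lemma tangent_cap_area_bounds:
  assumes v: "v \<in> I" and "r > 0" and nbhd: "{v - r..v + r} \<subseteq> I" and "c > 0"
    and curv: "\<And>t. t \<in> {v - r..v + r} \<Longrightarrow> c \<le> f'' t / 2 \<and> f'' t / 2 \<le> C"
    and "0 < k" "k < c * r^2"
  obtains \<alpha> \<beta> where "is_tangent_chord I f k v \<alpha> \<beta>"
    "4/3 * k * sqrt (k / C) \<le> tangent_cap_area f k v \<alpha> \<beta>"
    "tangent_cap_area f k v \<alpha> \<beta> \<le> 4/3 * k * sqrt (k / c)"
proof -
  obtain \<alpha> \<beta> where ab: "v - r \<le> \<alpha>" "\<alpha> < v" "v < \<beta>" "\<beta> \<le> v + r"
      and chord: "{x \<in> I. tangent_gap v x = k} = {\<alpha>, \<beta>}"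
    using tangent_gap_chord[OF v \<open>r > 0\<close> nbhd _ \<open>0 < k\<close> \<open>k < c * r^2\<close>] curv by blast
  have ends: "\<alpha> \<in> I" "\<beta> \<in> I" "tangent_gap v \<alpha> = k" "tangent_gap v \<beta> = k"
    using chord by blast+
  have sub: "{\<alpha>..\<beta>} \<subseteq> I"
    using ab nbhd by auto
  have curv_between: "c \<le> f'' t / 2 \<and> f'' t / 2 \<le> C"
    if "x \<in> {\<alpha>..\<beta>}" "t \<in> {min x v..max x v}" for x t
    by (intro curv) (use that ab in auto)
  have "c \<le> C"
    using curv[of v] \<open>r > 0\<close> by auto
  have lower: "4/3 * k * sqrt (k / C) \<le> integral {\<alpha>..\<beta>} (\<lambda>x. k - tangent_gap v x)"
  proof (rule cap_area_ge)
    show "tangent_gap v x \<le> k" if "x \<in> {\<alpha>..\<beta>}" for x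
      using tangent_gap_le_max[OF v ends(1,2) that] ends by simp
    show "tangent_gap v x \<le> C * (x - v)^2" if "x \<in> {\<alpha>..\<beta>}" for x
      by (intro tangent_gap_le_parabola v) (use that sub in blast, use curv_between[OF that] in blast)
  qed (use ab ends sub \<open>c > 0\<close> \<open>c \<le> C\<close> \<open>0 < k\<close> continuous_on_tangent_gap in auto)
  have upper: "integral {\<alpha>..\<beta>} (\<lambda>x. k - tangent_gap v x) \<le> 4/3 * k * sqrt (k / c)"
  proof (rule cap_area_le)
    show "c * (x - v)^2 \<le> tangent_gap v x" if "x \<in> {\<alpha>..\<beta>}" for x
      by (intro tangent_gap_ge_parabola v) (use that sub in blast, use curv_between[OF that] in blast)
  qed (use ab ends sub \<open>c > 0\<close> \<open>0 < k\<close> continuous_on_tangent_gap in auto)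
  have "f x = tangent_line f k v x \<longleftrightarrow> tangent_gap v x = k" for x
    using tangent_line_minus_f[OF v, of k x] by auto
  then have "{x \<in> I. f x = tangent_line f k v x} = {x \<in> I. tangent_gap v x = k}"
    by simp
  moreover have "tangent_cap_area f k v \<alpha> \<beta> = integral {\<alpha>..\<beta>} (\<lambda>x. k - tangent_gap v x)"
    using tangent_line_minus_f[OF v] by (simp add: tangent_cap_area_def)
  ultimately show ?thesis
    using that[of \<alpha> \<beta>] chord ab lower upper by (auto simp: is_tangent_chord_def)
qed

lemma eventually_tangent_cap_area_bounds:
  assumes v: "v \<in> I" and "isCont f'' v" "0 < \<epsilon>" "\<epsilon> < f'' v / 2"
  shows "\<forall>\<^sub>F k in at_right 0. \<exists>\<alpha> \<beta>. is_tangent_chord I f k v \<alpha> \<beta> \<and>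
    4/3 * k * sqrt (k / (f'' v / 2 + \<epsilon>)) \<le> tangent_cap_area f k v \<alpha> \<beta> \<and>
    tangent_cap_area f k v \<alpha> \<beta> \<le> 4/3 * k * sqrt (k / (f'' v / 2 - \<epsilon>))"
proof -
  have "isCont (\<lambda>x. f'' x / 2) v"
    using assms(2) by (auto intro!: continuous_intros)
  then obtain r where "r > 0" "{v - r..v + r} \<subseteq> I"
    and near: "\<And>t. t \<in> {v - r..v + r} \<Longrightarrow> \<bar>f'' t / 2 - f'' v / 2\<bar> < \<epsilon>"
    using isCont_closed_interval_nbhd[OF open_I v _ \<open>0 < \<epsilon>\<close>] by blast
  have curv: "f'' v / 2 - \<epsilon> \<le> f'' t / 2 \<and> f'' t / 2 \<le> f'' v / 2 + \<epsilon>"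
    if "t \<in> {v - r..v + r}" for t
    using near[OF that] by (simp add: abs_less_iff)
  have "0 < f'' v / 2 - \<epsilon>"
    using assms(4) by simp
  show ?thesis
    unfolding eventually_at_right_field
  proof (rule exI[of _ "(f'' v / 2 - \<epsilon>) * r^2"], intro conjI allI impI)
    show "0 < (f'' v / 2 - \<epsilon>) * r^2"
      using \<open>0 < f'' v / 2 - \<epsilon>\<close> \<open>r > 0\<close> by simp
    fix k :: real assume "0 < k" "k < (f'' v / 2 - \<epsilon>) * r^2"
    obtain \<alpha> \<beta> where "is_tangent_chord I f k v \<alpha> \<beta>"
      "4/3 * k * sqrt (k / (f'' v / 2 + \<epsilon>)) \<le> tangent_cap_area f k v \<alpha> \<beta>"
      "tangent_cap_area f k v \<alpha> \<beta> \<le> 4/3 * k * sqrt (k / (f'' v / 2 - \<epsilon>))"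
      by (rule tangent_cap_area_bounds[OF v \<open>r > 0\<close> \<open>{v - r..v + r} \<subseteq> I\<close>
            \<open>0 < f'' v / 2 - \<epsilon>\<close> curv \<open>0 < k\<close> \<open>k < (f'' v / 2 - \<epsilon>) * r^2\<close>])
    then show "\<exists>\<alpha> \<beta>. is_tangent_chord I f k v \<alpha> \<beta> \<and>
      4/3 * k * sqrt (k / (f'' v / 2 + \<epsilon>)) \<le> tangent_cap_area f k v \<alpha> \<beta> \<and>
      tangent_cap_area f k v \<alpha> \<beta> \<le> 4/3 * k * sqrt (k / (f'' v / 2 - \<epsilon>))"
      by blast
  qed
qed

lemma condition_B_f''_not_less:
  assumes B: "condition_B I f" and cont: "\<And>x. x \<in> I \<Longrightarrow> isCont f'' x"
    and v1: "v1 \<in> I" and v2: "v2 \<in> I"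
  shows "\<not> f'' v1 < f'' v2"
proof
  assume less: "f'' v1 < f'' v2"
  define \<epsilon> where "\<epsilon> = min (f'' v1 / 4) ((f'' v2 - f'' v1) / 6)"
  have \<epsilon>: "\<epsilon> \<le> f'' v1 / 4" "\<epsilon> \<le> (f'' v2 - f'' v1) / 6"
    unfolding \<epsilon>_def by linarith+
  have "\<epsilon> > 0"
    using less f''_pos[OF v1] by (simp add: \<epsilon>_def)
  have "\<epsilon> < f'' v1 / 2" "\<epsilon> < f'' v2 / 2"
    using \<epsilon> \<open>\<epsilon> > 0\<close> less by linarith+
  have gap: "f'' v1 / 2 + \<epsilon> < f'' v2 / 2 - \<epsilon>"
    using \<epsilon> \<open>\<epsilon> > 0\<close> less by (simp add: field_simps)
  obtain \<phi> where "\<forall>\<^sub>F k in at_right 0. \<forall>v\<in>I. \<forall>\<alpha> \<beta>.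
      is_tangent_chord I f k v \<alpha> \<beta> \<longrightarrow> tangent_cap_area f k v \<alpha> \<beta> = \<phi> k"
    using B unfolding condition_B_iff_eventually by blast
  then have "\<forall>\<^sub>F k in at_right (0::real). False"
    using eventually_tangent_cap_area_bounds[OF v1 cont[OF v1] \<open>\<epsilon> > 0\<close> \<open>\<epsilon> < f'' v1 / 2\<close>]
      eventually_tangent_cap_area_bounds[OF v2 cont[OF v2] \<open>\<epsilon> > 0\<close> \<open>\<epsilon> < f'' v2 / 2\<close>]
      eventually_at_right_less[of "0::real"]
  proof eventually_elim
    case (elim k)
    then have "4/3 * k * sqrt (k / (f'' v1 / 2 + \<epsilon>)) \<le> \<phi> k"
      "\<phi> k \<le> 4/3 * k * sqrt (k / (f'' v2 / 2 - \<epsilon>))"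
      using v1 v2 by fastforce+
    then have "4/3 * k * sqrt (k / (f'' v1 / 2 + \<epsilon>)) \<le> 4/3 * k * sqrt (k / (f'' v2 / 2 - \<epsilon>))"
      by linarith
    then have "k / (f'' v1 / 2 + \<epsilon>) \<le> k / (f'' v2 / 2 - \<epsilon>)"
      using \<open>0 < k\<close> by simp
    moreover have "k / (f'' v2 / 2 - \<epsilon>) < k / (f'' v1 / 2 + \<epsilon>)"
      using \<open>0 < k\<close> \<open>\<epsilon> > 0\<close> f''_pos[OF v1] gap by (intro divide_strict_left_mono) auto
    ultimately show False
      by simp
  qed
  then show False
    by (simp add: eventually_False)
qed

end

lemma quadratic_tangent_cap_area:
  fixes a b c :: real
  assumes "open I" "is_interval I" and quad: "\<And>x. x \<in> I \<Longrightarrow> f x = a * x^2 + b * x + c"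
    and "0 < k" "v \<in> I" and chord: "is_tangent_chord I f k v \<alpha> \<beta>"
  shows "tangent_cap_area f k v \<alpha> \<beta> = 4/3 * k * sqrt (k / a)"
proof -
  have "(f has_real_derivative 2 * a * v + b) (at v)"
  proof (rule has_field_derivative_transform_within_open[OF _ \<open>open I\<close> \<open>v \<in> I\<close>])
    show "((\<lambda>x. a * x^2 + b * x + c) has_real_derivative 2 * a * v + b) (at v)"
      by (auto intro!: derivative_eq_intros)
  qed (use quad in auto)
  then have gap: "tangent_line f k v x - f x = k - a * (x - v)^2" if "x \<in> I" for x
    using quad[OF that] quad[OF \<open>v \<in> I\<close>]
    by (simp add: DERIV_imp_deriv tangent_line_def power2_eq_square algebra_simps)
  have "\<alpha> \<in> I" "\<beta> \<in> I" "f \<alpha> = tangent_line f k v \<alpha>" "f \<beta> = tangent_line f k v \<beta>"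
    using chord by (auto simp: is_tangent_chord_def set_eq_iff)
  then have ends: "\<alpha> \<in> I" "\<beta> \<in> I" "a * (\<alpha> - v)^2 = k" "a * (\<beta> - v)^2 = k"
    using gap[of \<alpha>] gap[of \<beta>] by auto
  then have "a > 0"
    using \<open>0 < k\<close> by (metis zero_le_power2 mult_nonpos_nonneg not_le)
  define h where "h = sqrt (k / a)"
  have "\<bar>x - v\<bar> = h" if "a * (x - v)^2 = k" for x
  proof -
    have "k / a = (x - v)^2"
      using that \<open>a > 0\<close> by (auto simp: field_simps)
    then show ?thesis
      by (simp add: h_def)
  qed
  then have "\<bar>\<alpha> - v\<bar> = h" "\<bar>\<beta> - v\<bar> = h"
    using ends by auto
  then have "\<alpha> = v - h" "\<beta> = v + h"
    using chord by (auto simp: is_tangent_chord_def abs_if split: if_splits)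
  have "{\<alpha>..\<beta>} \<subseteq> I"
    using \<open>is_interval I\<close> ends by (intro is_interval_atLeastAtMost_subset)
  then have "tangent_cap_area f k v \<alpha> \<beta> = integral {\<alpha>..\<beta>} (\<lambda>x. k - a * (x - v)^2)"
    unfolding tangent_cap_area_def using gap by (intro integral_cong) auto
  also have "\<dots> = 4/3 * k * sqrt (k / a)"
    using parabola_cap_has_integral[of a k v] \<open>a > 0\<close> \<open>0 < k\<close> \<open>\<alpha> = v - h\<close> \<open>\<beta> = v + h\<close>
    by (simp add: h_def integral_unique)
  finally show ?thesis .
qed

lemma quadratic_imp_condition_B:
  fixes a b c :: real
  assumes "open I" "is_interval I" and "\<And>x. x \<in> I \<Longrightarrow> f x = a * x^2 + b * x + c"
  shows "condition_B I f"
  unfolding condition_B_iff_eventually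
proof (intro exI)
  show "\<forall>\<^sub>F k in at_right 0. \<forall>v\<in>I. \<forall>\<alpha> \<beta>. is_tangent_chord I f k v \<alpha> \<beta> \<longrightarrow>
      tangent_cap_area f k v \<alpha> \<beta> = 4/3 * k * sqrt (k / a)"
    using eventually_at_right_less[of "0::real"]
    by eventually_elim (use assms quadratic_tangent_cap_area in blast)
qed

lemma constant_second_derivative_imp_quadratic:
  fixes f f' :: "real \<Rightarrow> real"
  assumes "is_interval I"
    and f': "\<And>x. x \<in> I \<Longrightarrow> (f has_real_derivative f' x) (at x)"
    and f'': "\<And>x. x \<in> I \<Longrightarrow> (f' has_real_derivative C) (at x)"
  shows "\<exists>b c. \<forall>x\<in>I. f x = C / 2 * x^2 + b * x + c"
proof -
  have "convex I"
    using \<open>is_interval I\<close> by (rule is_interval_convex)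
  have "\<exists>b. \<forall>x\<in>I. f' x - C * x = b"
    using \<open>convex I\<close>
  proof (rule has_field_derivative_zero_constant)
    show "((\<lambda>x. f' x - C * x) has_real_derivative 0) (at x within I)" if "x \<in> I" for x
      using f''[OF that] by (auto intro!: derivative_eq_intros intro: has_field_derivative_at_within)
  qed
  then obtain b where b: "\<And>x. x \<in> I \<Longrightarrow> f' x = C * x + b"
    by (metis diff_eq_eq add.commute)
  have "\<exists>c. \<forall>x\<in>I. f x - (C / 2 * x^2 + b * x) = c"
    using \<open>convex I\<close>
  proof (rule has_field_derivative_zero_constant)
    show "((\<lambda>x. f x - (C / 2 * x^2 + b * x)) has_real_derivative 0) (at x within I)" if "x \<in> I" for x
      using f'[OF that] b[OF that] by (auto intro!: derivative_eq_intros intro: has_field_derivative_at_within)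
  qed
  then show ?thesis
    by (metis diff_eq_eq add.commute)
qed

theorem theorem2:
  fixes I :: "real set" and f f' f'' f''' :: "real \<Rightarrow> real"
  assumes I_open: "open I" and I_interval: "is_interval I" and I_ne: "I \<noteq> {}"
    and d1: "\<And>x. x \<in> I \<Longrightarrow> (f has_real_derivative f' x) (at x)"
    and d2: "\<And>x. x \<in> I \<Longrightarrow> (f' has_real_derivative f'' x) (at x)"
    and d3: "\<And>x. x \<in> I \<Longrightarrow> (f'' has_real_derivative f''' x) (at x)"
    and c3: "continuous_on I f'''"
    and convex: "\<And>x. x \<in> I \<Longrightarrow> f'' x > 0"
  shows "(\<exists>a b c. \<forall>x\<in>I. f x = a * x ^ 2 + b * x + c) \<longleftrightarrow> condition_B I f"
proof
  assume "\<exists>a b c. \<forall>x\<in>I. f x = a * x ^ 2 + b * x + c"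
  then show "condition_B I f"
    using quadratic_imp_condition_B[OF I_open I_interval] by blast
next
  assume B: "condition_B I f"
  interpret positive_second_derivative I f f' f''
    using I_open I_interval d1 d2 convex by unfold_locales
  \<comment> \<open>Only continuity of f'' (a consequence of d3) is needed.\<close>
  obtain x0 where x0: "x0 \<in> I"
    using I_ne by blast
  have "f'' x = f'' x0" if "x \<in> I" for x
    using condition_B_f''_not_less[OF B _ that x0] condition_B_f''_not_less[OF B _ x0 that]
      d3 DERIV_isCont by (metis linorder_neqE_linordered_idom)
  then show "\<exists>a b c. \<forall>x\<in>I. f x = a * x ^ 2 + b * x + c"
    using constant_second_derivative_imp_quadratic[OF I_interval d1, of "f'' x0"] d2 by metis
qed

end
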